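(* Let $q$ be a prime power, $m\ge 2$, $1\le k<n$, and let $0<s<m$ with $\gcd(s,m)=1$. Then: (1) For $A \in \mathbb{F}_{q^m}^{k\times (n-k)}$, there exists $X \in \mathbb{F}_{q^m}^{k\times (n-k)}$ with $\varPhi_s(X)=A$ if and only if $A\in\mathcal K$. (2) If $A \in \mathcal R_1$, then $|\varPhi_s^{-1}(A)|=0$ if $A\notin \mathcal K$, and $|\varPhi_s^{-1}(A)|=q^{k(n-k)}$ if $A\in \mathcal K$. (3) $\mathcal G(s)=\varPhi_s^{-1}(\mathcal R_1^*\cap \mathcal K)$, and $|\mathcal G(1)|=|\mathcal G(s)|=q^{k(n-k)}|\mathcal R_1^*\cap \mathcal K|$.
   Context: $\mathrm{Tr}_{\mathbb{F}_{q^m}/\mathbb{F}_q}(\alpha)=\sum_{i=0}^{m-1}\alpha^{q^i}$. $\varPhi_s:\mathbb{F}_{q^m}^{k\times (n-k)}\to\mathbb{F}_{q^m}^{k\times (n-k)}$, $X\mapsto X^{(q^s)}-X$, where $X^{(q^s)}$ raises each entry to the $q^s$-th power. $\mathcal R_1:=\{A\in \mathbb{F}_{q^m}^{k\times (n-k)} \mid \mathrm{rk}(A)=1\}$, $\mathcal R_1^*:=\{A\in (\mathbb{F}_{q^m}^* )^{k\times (n-k)} \mid \mathrm{rk}(A)=1\}$, $\mathcal K:=\left(\ker \mathrm{Tr}_{\mathbb{F}_{q^m}/\mathbb{F}_q}\right)^{k\times(n-k)}$, and $\mathcal G(s):=\{X \in (\mathbb{F}_{q^m}\setminus \mathbb{F}_q)^{k\times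 (n-k)} \mid \mathrm{rk}(X^{(q^s)}-X)=1\}$. *)

theory Defs
  imports "HOL-Analysis.Analysis" "HOL-Computational_Algebra.Primes"
begin

(* The ambient field F_{q^m} is a finite field type 'a with CARD('a) = q^m.
   Its subfield F_q is the set of fixed points of the q-Frobenius. *)
definition Fq :: "nat \<Rightarrow> 'a::{field,finite} set" where
  "Fq q = {x. x ^ q = x}"

definition trace :: "nat \<Rightarrow> nat \<Rightarrow> 'a::{field,finite} \<Rightarrow> 'a" where
  "trace q m a = (\<Sum>i<m. a ^ (q ^ i))"

(* Matrices in F_{q^m}^{k x (n-k)}: type 'a^'l^'k with CARD('k) = k, CARD('l) = n-k *)
definition Phi :: "nat \<Rightarrow> nat \<Rightarrow> 'a::{field,finite}^'l^'k \<Rightarrow> 'a^'l^'k" where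
  "Phi q s X = (\<chi> i j. (X$i$j) ^ (q ^ s) - X$i$j)"

definition R1 :: "('a::{field,finite}^'l^'k) set" where
  "R1 = {A. rank A = 1}"

definition R1star :: "('a::{field,finite}^'l^'k) set" where
  "R1star = {A. (\<forall>i j. A$i$j \<noteq> 0) \<and> rank A = 1}"

definition KK :: "nat \<Rightarrow> nat \<Rightarrow> ('a::{field,finite}^'l^'k) set" where
  "KK q m = {A. \<forall>i j. trace q m (A$i$j) = 0}"

definition GG :: "nat \<Rightarrow> nat \<Rightarrow> ('a::{field,finite}^'l^'k) set" where
  "GG q s = {X. (\<forall>i j. X$i$j \<notin> Fq q) \<and> rank (Phi q s X) = 1}"

end

theory Submission
  imports Defs "HOL-Computational_Algebra.Polynomial"
begin

text \<open>
  Let F be the field with q^m elements and phi(x) = x^(q^s) - x. By the Frobenius, phi is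
  additive, so |F| = |ker phi| * |im phi|. As gcd s m = 1, ker phi is the set of roots of
  x^q - x, so it has at most q elements; and im phi lies in the kernel of the trace, the set of
  roots of a nonzero polynomial of degree q^(m-1). Since |F| = q^m, both bounds are attained:
  ker phi = F_q and im phi = ker Tr. Applied entrywise, this describes the image of Phi_s, and
  every nonempty fibre of Phi_s is a coset of its kernel, the matrices over F_q.
\<close>

lemma prime_CHAR_finite_field: "prime CHAR('a::{field,finite})"
  using prime_CHAR_semidom[where ?'a='a] finite_imp_CHAR_pos[where ?'a='a] by auto

lemma of_nat_CARD_eq_0: "of_nat CARD('a::{ring_1,finite}) = (0::'a)"
proof -
  have "(\<Sum>x\<in>UNIV. x + 1) = (\<Sum>x\<in>(UNIV::'a set). x)"
    by (rule sum.reindex_bij_witness[of _ "\<lambda>x. x - 1" "\<lambda>x. x + 1"]) auto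
  thus ?thesis by (simp add: sum.distrib)
qed

lemma CHAR_eq_if_card_eq_prime_power:
  assumes "prime p" "CARD('a::{field,finite}) = p ^ n"
  shows "CHAR('a) = p"
proof -
  have "CHAR('a) dvd CARD('a)"
    using of_nat_CARD_eq_0[where ?'a='a] of_nat_eq_0_iff_char_dvd by blast
  hence "CHAR('a) dvd p ^ n" using assms(2) by simp
  hence "CHAR('a) dvd p" using prime_CHAR_finite_field prime_dvd_power by blast
  thus ?thesis using prime_CHAR_finite_field assms(1) primes_dvd_imp_eq by blast
qed

text \<open>The library's \<open>finite_field_power_card_eq_same\<close> needs the sort \<open>finite_field\<close>, which a
  type variable of sort \<open>{field, finite}\<close> does not have.\<close>

lemma power_card_eq_same:
  fixes x :: "'a::{field,finite}"
  shows "x ^ CARD('a) = x"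
proof (cases "x = 0")
  case True
  then show ?thesis by simp
next
  case False
  let ?U = "UNIV - {0::'a}"
  have "(\<Prod>y\<in>?U. x * y) = (\<Prod>y\<in>?U. y)"
    by (rule prod.reindex_bij_witness[of _ "\<lambda>y. y / x" "\<lambda>y. x * y"]) (use False in auto)
  moreover have "(\<Prod>y\<in>?U. x * y) = x ^ card ?U * (\<Prod>y\<in>?U. y)"
    by (simp add: prod.distrib)
  moreover have "(\<Prod>y\<in>?U. y) \<noteq> 0" by (simp add: prod_zero_iff)
  ultimately have "x ^ card ?U = 1" by simp
  moreover have "card ?U = CARD('a) - 1"
    by (rule card_Diff_singleton) simp
  moreover have "CARD('a) = Suc (CARD('a) - 1)"
    by (simp add: Suc_diff_le)
  ultimately show ?thesis by (metis power_Suc mult_1_right)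
qed

lemma power_power_eq_same:
  fixes x :: "'a::monoid_mult"
  assumes "x ^ N = x"
  shows "x ^ (N ^ a) = x"
proof (induction a)
  case (Suc a)
  have "x ^ (N ^ Suc a) = (x ^ N) ^ (N ^ a)" by (simp add: power_mult mult.commute)
  then show ?case using assms Suc by simp
qed simp

lemma power_CHAR_power_diff:
  fixes x y :: "'a::comm_ring_1"
  assumes "prime CHAR('a)" "q = CHAR('a) ^ e"
  shows "(x - y) ^ (q ^ j) = x ^ (q ^ j) - y ^ (q ^ j)"
proof -
  have "x ^ (q ^ j) = ((x - y) + y) ^ (q ^ j)" by simp
  also have "\<dots> = (x - y) ^ (q ^ j) + y ^ (q ^ j)"
    by (rule freshmans_dream'[where n="e * j"]) (use assms in \<open>auto simp: power_mult\<close>)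
  finally show ?thesis by (simp add: algebra_simps)
qed

lemma trace_diff:
  fixes x y :: "'a::{field,finite}"
  assumes "q = CHAR('a) ^ e"
  shows "trace q m (x - y) = trace q m x - trace q m y"
  unfolding trace_def
  by (simp add: power_CHAR_power_diff[OF prime_CHAR_finite_field assms] sum_subtractf)

lemma trace_power_q:
  fixes x :: "'a::{field,finite}"
  assumes "CARD('a) = q ^ m"
  shows "trace q m (x ^ q) = trace q m x"
proof -
  have "trace q m (x ^ q) = (\<Sum>i<m. x ^ (q ^ Suc i))"
    unfolding trace_def by (simp add: power_mult[symmetric] mult.commute)
  also have "\<dots> = (\<Sum>i<Suc m. x ^ (q ^ i)) - x"
    by (subst sum.lessThan_Suc_shift) simp
  also have "\<dots> = trace q m x"
    using power_card_eq_same[of x] assms by (simp add: trace_def)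
  finally show ?thesis .
qed

lemma trace_power_q_power:
  fixes x :: "'a::{field,finite}"
  assumes "CARD('a) = q ^ m"
  shows "trace q m (x ^ (q ^ s)) = trace q m x"
proof (induction s)
  case (Suc s)
  have "x ^ (q ^ Suc s) = (x ^ (q ^ s)) ^ q" by (simp add: power_mult[symmetric] mult.commute)
  then show ?case using trace_power_q[OF assms, of "x ^ (q ^ s)"] Suc by simp
qed simp

lemma trace_power_minus_self:
  fixes x :: "'a::{field,finite}"
  assumes "q = CHAR('a) ^ e" "CARD('a) = q ^ m"
  shows "trace q m (x ^ (q ^ s) - x) = 0"
  by (simp add: trace_diff[OF assms(1)] trace_power_q_power[OF assms(2)])

lemma card_trace_kernel_le:
  assumes "q \<ge> 2" "m \<ge> 1"
  shows "card {x::'a::{field,finite}. trace q m x = 0} \<le> q ^ (m - 1)"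
proof -
  define P :: "'a poly" where "P = (\<Sum>i<m. monom 1 (q ^ i))"
  have "poly P x = trace q m x" for x
    unfolding P_def trace_def by (simp add: poly_sum poly_monom)
  moreover have "degree P \<le> q ^ (m - 1)"
    unfolding P_def
  proof (rule degree_sum_le)
    fix i assume "i \<in> {..<m}"
    hence "q ^ i \<le> q ^ (m - 1)" using assms by (intro power_increasing) auto
    thus "degree (monom (1::'a) (q ^ i)) \<le> q ^ (m - 1)" using degree_monom_le order_trans by blast
  qed simp
  moreover have "coeff P (q ^ (m - 1)) = 1"
  proof -
    have "coeff P (q ^ (m - 1)) = (\<Sum>i<m. if i = m - 1 then 1 else 0)"
      unfolding P_def coeff_sum coeff_monom
      using assms by (intro sum.cong refl) (simp add: power_inject_exp)
    also have "\<dots> = 1" using assms by simp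
    finally show ?thesis .
  qed
  hence "P \<noteq> 0" by auto
  ultimately show ?thesis using card_poly_roots_bound[of P] by simp
qed

lemma card_power_fixed_le:
  assumes "q \<ge> 2"
  shows "card {x::'a::{field,finite}. x ^ q = x} \<le> q"
proof -
  define P :: "'a poly" where "P = monom 1 q - monom 1 1"
  have "poly P x = 0 \<longleftrightarrow> x ^ q = x" for x
    unfolding P_def by (simp add: poly_monom)
  moreover have "degree P \<le> q"
    unfolding P_def using assms
    by (meson degree_diff_le degree_monom_le le_trans one_le_numeral order_trans)
  moreover have "coeff P q = 1" unfolding P_def using assms by simp
  hence "P \<noteq> 0" by auto
  ultimately show ?thesis using card_poly_roots_bound[of P] by simp
qed

lemma power_q_power_fixed_iff:
  fixes x :: "'a::{field,finite}"
  assumes "CARD('a) = q ^ m" "0 < s" "gcd s m = 1"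
  shows "x ^ (q ^ s) = x \<longleftrightarrow> x ^ q = x"
proof
  assume fixed_s: "x ^ (q ^ s) = x"
  obtain a b where bezout: "s * a = m * b + 1" using bezout_nat[of s m] assms by auto
  have "x ^ (q ^ (m * b)) = x"
    using power_power_eq_same[of x "q ^ m" b] power_card_eq_same[of x] assms
    by (simp add: power_mult)
  moreover have "x ^ (q ^ (m * b + 1)) = (x ^ (q ^ (m * b))) ^ q"
    by (simp add: power_mult[symmetric] mult.commute)
  ultimately have "x ^ (q ^ (m * b + 1)) = x ^ q" by simp
  moreover have "x ^ (q ^ (s * a)) = x"
    using power_power_eq_same[OF fixed_s, of a] by (simp add: power_mult)
  ultimately show "x ^ q = x" using bezout by simp
qed (rule power_power_eq_same)

lemma card_fibre_eq_card_kernel: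
  fixes f :: "'a::{ab_group_add,finite} \<Rightarrow> 'b::ab_group_add"
  assumes diff: "\<And>x y. f (x - y) = f x - f y" and "a \<in> range f"
  shows "card {x. f x = a} = card {x. f x = 0}"
proof -
  obtain x0 where x0: "f x0 = a" using assms(2) by auto
  have "f (y + x0) = f y + f x0" for y
    using diff[of "y + x0" x0] by (simp add: algebra_simps)
  hence "bij_betw (\<lambda>x. x - x0) {x. f x = a} {x. f x = 0}"
    by (intro bij_betw_byWitness[where f'="\<lambda>y. y + x0"]) (auto simp: diff x0)
  thus ?thesis by (rule bij_betw_same_card)
qed

lemma card_vimage_eq_sum_card_fibres:
  fixes f :: "'a::finite \<Rightarrow> 'b"
  assumes "finite B"
  shows "card (f -` B) = (\<Sum>b\<in>B. card {x. f x = b})"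
proof -
  have "f -` B = (\<Union>b\<in>B. {x. f x = b})" by auto
  also have "card \<dots> = (\<Sum>b\<in>B. card {x. f x = b})"
    by (rule card_UN_disjoint) (use assms in auto)
  finally show ?thesis .
qed

lemma card_UNIV_eq_card_range_mult_card_kernel:
  fixes f :: "'a::{ab_group_add,finite} \<Rightarrow> 'b::ab_group_add"
  assumes "\<And>x y. f (x - y) = f x - f y"
  shows "CARD('a) = card (range f) * card {x. f x = 0}"
proof -
  have "f -` range f = UNIV" by auto
  hence "CARD('a) = card (f -` range f)" by simp
  also have "\<dots> = (\<Sum>b\<in>range f. card {x. f x = b})"
    by (rule card_vimage_eq_sum_card_fibres) simp
  also have "\<dots> = (\<Sum>b\<in>range f. card {x. f x = 0})"
    by (intro sum.cong refl card_fibre_eq_card_kernel[OF assms])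
  finally show ?thesis by simp
qed

lemma card_range_power_minus_self:
  fixes t :: nat
  assumes "q = CHAR('a::{field,finite}) ^ e" "CARD('a) = q ^ m"
  shows "card (range (\<lambda>x::'a. x ^ (q ^ t) - x)) * card {x::'a. x ^ (q ^ t) = x} = q ^ m"
proof -
  let ?f = "\<lambda>x::'a. x ^ (q ^ t) - x"
  have "?f (x - y) = ?f x - ?f y" for x y
    by (simp add: power_CHAR_power_diff[OF prime_CHAR_finite_field assms(1)])
  from card_UNIV_eq_card_range_mult_card_kernel[of ?f, OF this] show ?thesis
    using assms(2) by simp
qed

lemma two_le_CHAR_power:
  assumes "q = CHAR('a::{field,finite}) ^ e" "e \<ge> 1"
  shows "q \<ge> 2"
proof -
  have "CHAR('a) \<ge> 2" using prime_ge_2_nat prime_CHAR_finite_field by blast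
  moreover from this have "CHAR('a) ^ 1 \<le> CHAR('a) ^ e"
    using \<open>e \<ge> 1\<close> by (intro power_increasing) auto
  ultimately show ?thesis using assms(1) by simp
qed

lemma card_Fq:
  assumes q: "q = CHAR('a::{field,finite}) ^ e" and "e \<ge> 1" and card: "CARD('a) = q ^ m"
    and "m \<ge> 1"
  shows "card (Fq q :: 'a set) = q"
proof -
  have "q \<ge> 2" using two_le_CHAR_power[OF q \<open>e \<ge> 1\<close>] .
  define R where "R = card (range (\<lambda>x::'a. x ^ q - x))"
  define K where "K = card (Fq q :: 'a set)"
  have "q ^ m = q ^ (m - 1) * q" using \<open>m \<ge> 1\<close> by (cases m) (simp_all add: mult.commute)
  hence RK: "R * K = q ^ (m - 1) * q"
    using card_range_power_minus_self[OF q card, of 1] by (simp add: R_def K_def Fq_def)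
  have "range (\<lambda>x::'a. x ^ q - x) \<subseteq> {x. trace q m x = 0}"
    using trace_power_minus_self[OF q card, of _ 1] by auto
  hence R_le: "R \<le> q ^ (m - 1)"
    unfolding R_def using card_trace_kernel_le[OF \<open>q \<ge> 2\<close> \<open>m \<ge> 1\<close>, where ?'a='a]
    by (meson card_mono finite le_trans)
  have "K \<le> q"
    using card_power_fixed_le[OF \<open>q \<ge> 2\<close>, where ?'a='a] by (simp add: K_def Fq_def)
  hence "R * K \<le> R * q" by simp
  moreover have "R * q \<le> R * K" using mult_le_mono1[OF R_le, of q] RK by simp
  ultimately have "R * K = R * q" by (rule antisym)
  moreover have "R \<noteq> 0" using RK \<open>q \<ge> 2\<close> by (intro notI) simp
  ultimately show ?thesis by (simp add: K_def)
qed

lemma range_power_minus_self: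
  assumes q: "q = CHAR('a::{field,finite}) ^ e" and "e \<ge> 1" and card: "CARD('a) = q ^ m"
    and "m \<ge> 1" and "0 < s" and "gcd s m = 1"
  shows "range (\<lambda>x::'a. x ^ (q ^ s) - x) = {x. trace q m x = 0}"
proof (rule card_seteq)
  have "q \<ge> 2" using two_le_CHAR_power[OF q \<open>e \<ge> 1\<close>] .
  show "range (\<lambda>x::'a. x ^ (q ^ s) - x) \<subseteq> {x. trace q m x = 0}"
    using trace_power_minus_self[OF q card] by auto
  have "{x::'a. x ^ (q ^ s) = x} = Fq q"
    using power_q_power_fixed_iff[OF card \<open>0 < s\<close> \<open>gcd s m = 1\<close>] by (auto simp: Fq_def)
  moreover have "q ^ m = q ^ (m - 1) * q" using \<open>m \<ge> 1\<close> by (cases m) (simp_all add: mult.commute)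
  ultimately have "card (range (\<lambda>x::'a. x ^ (q ^ s) - x)) * q = q ^ (m - 1) * q"
    using card_range_power_minus_self[OF q card, of s] card_Fq[OF assms(1-4)] by simp
  hence "card (range (\<lambda>x::'a. x ^ (q ^ s) - x)) = q ^ (m - 1)" using \<open>q \<ge> 2\<close> by simp
  thus "card {x::'a. trace q m x = 0} \<le> card (range (\<lambda>x::'a. x ^ (q ^ s) - x))"
    using card_trace_kernel_le[OF \<open>q \<ge> 2\<close> \<open>m \<ge> 1\<close>, where ?'a='a] by simp
qed simp

lemma card_vec_entries_in:
  "card {v::'b^'n. \<forall>i. v$i \<in> S} = card S ^ CARD('n)"
proof -
  have "{v::'b^'n. \<forall>i. v$i \<in> S} = vec_lambda ` PiE UNIV (\<lambda>_. S)"
  proof (intro equalityI subsetI)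
    fix v :: "'b^'n"
    assume "v \<in> {v. \<forall>i. v$i \<in> S}"
    hence "vec_nth v \<in> PiE UNIV (\<lambda>_. S)" by auto
    thus "v \<in> vec_lambda ` PiE UNIV (\<lambda>_. S)" by (metis image_eqI vec_nth_inverse)
  qed auto
  moreover have "inj_on (vec_lambda :: ('n \<Rightarrow> 'b) \<Rightarrow> 'b^'n) (PiE UNIV (\<lambda>_. S))"
    by (auto simp: inj_on_def vec_lambda_inject)
  ultimately show ?thesis by (simp add: card_image card_PiE)
qed

lemma card_matrix_entries_in:
  "card {X::'b^'l^'k. \<forall>i j. X$i$j \<in> S} = card S ^ (CARD('k) * CARD('l))"
proof -
  have "{X::'b^'l^'k. \<forall>i j. X$i$j \<in> S} = {X. \<forall>i. X$i \<in> {v::'b^'l. \<forall>j. v$j \<in> S}}" by auto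
  hence "card {X::'b^'l^'k. \<forall>i j. X$i$j \<in> S} = (card S ^ CARD('l)) ^ CARD('k)"
    by (simp only: card_vec_entries_in)
  thus ?thesis by (simp add: power_mult[symmetric] mult.commute)
qed

lemma Phi_nth [simp]: "Phi q s X $ i $ j = (X$i$j) ^ (q ^ s) - X$i$j"
  by (simp add: Phi_def)

lemma Phi_diff:
  fixes X Y :: "'a::{field,finite}^'l^'k"
  assumes "q = CHAR('a) ^ e"
  shows "Phi q s (X - Y) = Phi q s X - Phi q s Y"
  by (simp add: vec_eq_iff power_CHAR_power_diff[OF prime_CHAR_finite_field assms])

lemma Phi_eq_0_iff:
  fixes X :: "'a::{field,finite}^'l^'k"
  assumes "CARD('a) = q ^ m" "0 < s" "gcd s m = 1"
  shows "Phi q s X = 0 \<longleftrightarrow> (\<forall>i j. X$i$j \<in> Fq q)"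
  using power_q_power_fixed_iff[OF assms] by (simp add: vec_eq_iff Fq_def)

lemma Phi_in_KK:
  assumes "q = CHAR('a::{field,finite}) ^ e" "CARD('a) = q ^ m"
  shows "Phi q s (X :: 'a^'l^'k) \<in> KK q m"
  by (simp add: KK_def trace_power_minus_self[OF assms])

lemma KK_subset_range_Phi:
  assumes "q = CHAR('a::{field,finite}) ^ e" "e \<ge> 1" "CARD('a) = q ^ m"
    and "m \<ge> 1" "0 < s" "gcd s m = 1"
  shows "KK q m \<subseteq> range (Phi q s :: 'a^'l^'k \<Rightarrow> _)"
proof
  fix A :: "'a^'l^'k"
  let ?\<phi> = "\<lambda>x::'a. x ^ (q ^ s) - x"
  assume "A \<in> KK q m"
  hence "A$i$j \<in> range ?\<phi>" for i j
    using range_power_minus_self[OF assms] by (simp add: KK_def)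
  hence "?\<phi> (inv ?\<phi> (A$i$j)) = A$i$j" for i j
    by (rule f_inv_into_f)
  hence "A = Phi q s (\<chi> i j. inv ?\<phi> (A$i$j))"
    by (simp add: vec_eq_iff)
  thus "A \<in> range (Phi q s)" by (rule range_eqI)
qed

lemma range_Phi:
  assumes "q = CHAR('a::{field,finite}) ^ e" "e \<ge> 1" "CARD('a) = q ^ m"
    and "m \<ge> 1" "0 < s" "gcd s m = 1"
  shows "range (Phi q s :: 'a^'l^'k \<Rightarrow> _) = KK q m"
  using Phi_in_KK[OF assms(1,3)] KK_subset_range_Phi[OF assms] by blast

lemma card_Phi_kernel:
  assumes "q = CHAR('a::{field,finite}) ^ e" "e \<ge> 1" "CARD('a) = q ^ m"
    and "m \<ge> 1" "0 < s" "gcd s m = 1"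
  shows "card {X::'a^'l^'k. Phi q s X = 0} = q ^ (CARD('k) * CARD('l))"
proof -
  have "{X::'a^'l^'k. Phi q s X = 0} = {X. \<forall>i j. X$i$j \<in> Fq q}"
    using Phi_eq_0_iff[OF assms(3,5,6)] by blast
  thus ?thesis by (simp add: card_matrix_entries_in card_Fq[OF assms(1-4)])
qed

lemma card_Phi_fibre:
  assumes "q = CHAR('a::{field,finite}) ^ e" "e \<ge> 1" "CARD('a) = q ^ m"
    and "m \<ge> 1" "0 < s" "gcd s m = 1"
  shows "card {X::'a^'l^'k. Phi q s X = A} =
    (if A \<in> KK q m then q ^ (CARD('k) * CARD('l)) else 0)"
proof (cases "A \<in> KK q m")
  case True
  hence in_range: "A \<in> range (Phi q s :: 'a^'l^'k \<Rightarrow> _)" using range_Phi[OF assms] by blast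
  have diff: "Phi q s (X - Y) = Phi q s X - Phi q s Y" for X Y :: "'a^'l^'k"
    by (rule Phi_diff[OF assms(1)])
  have "card {X::'a^'l^'k. Phi q s X = A} = card {X::'a^'l^'k. Phi q s X = 0}"
    by (rule card_fibre_eq_card_kernel[OF diff in_range])
  with True show ?thesis by (simp add: card_Phi_kernel[OF assms])
next
  case False
  hence "{X::'a^'l^'k. Phi q s X = A} = {}" using range_Phi[OF assms] by blast
  thus ?thesis using False by simp
qed

lemma GG_eq_vimage_Phi:
  assumes "q = CHAR('a::{field,finite}) ^ e" "e \<ge> 1" "CARD('a) = q ^ m"
    and "m \<ge> 1" "0 < s" "gcd s m = 1"
  shows "(GG q s :: ('a^'l^'k) set) = Phi q s -` (R1star \<inter> KK q m)"
proof -
  have "X$i$j \<notin> Fq q \<longleftrightarrow> Phi q s X $ i $ j \<noteq> 0" for X :: "'a^'l^'k" and i j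
    using power_q_power_fixed_iff[OF assms(3,5,6)] by (simp add: Fq_def)
  thus ?thesis
    using Phi_in_KK[OF assms(1,3)] by (auto simp only: GG_def R1star_def vimage_def)
qed

lemma card_GG:
  assumes "q = CHAR('a::{field,finite}) ^ e" "e \<ge> 1" "CARD('a) = q ^ m"
    and "m \<ge> 1" "0 < s" "gcd s m = 1"
  shows "card (GG q s :: ('a^'l^'k) set) =
    q ^ (CARD('k) * CARD('l)) * card (R1star \<inter> KK q m :: ('a^'l^'k) set)"
proof -
  have "card (GG q s :: ('a^'l^'k) set) =
      (\<Sum>A\<in>(R1star \<inter> KK q m :: ('a^'l^'k) set). card {X. Phi q s X = A})"
    unfolding GG_eq_vimage_Phi[OF assms] by (rule card_vimage_eq_sum_card_fibres) simp
  also have "\<dots> = (\<Sum>A\<in>(R1star \<inter> KK q m :: ('a^'l^'k) set). q ^ (CARD('k) * CARD('l)))"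
    by (intro sum.cong refl) (simp add: card_Phi_fibre[OF assms])
  finally show ?thesis by (simp add: mult.commute)
qed

theorem lemma4p8:
  fixes q m s :: nat
  assumes "\<exists>p e. prime p \<and> e \<ge> 1 \<and> q = p ^ e"
    and "m \<ge> 2"
    and "CARD('a::{field,finite}) = q ^ m"
    and "0 < s" and "s < m" and "gcd s m = 1"
  shows "(\<forall>A :: 'a^'l::finite^'k::finite.
            (\<exists>X. Phi q s X = A) \<longleftrightarrow> A \<in> KK q m)
       \<and> (\<forall>A :: 'a^'l^'k. A \<in> R1 \<longrightarrow>
            card {X. Phi q s X = A} =
              (if A \<in> KK q m then q ^ (CARD('k) * CARD('l)) else 0))
       \<and> (GG q s :: ('a^'l^'k) set) = Phi q s -` (R1star \<inter> KK q m)
       \<and> card (GG q 1 :: ('a^'l^'k) set) = card (GG q s :: ('a^'l^'k) set)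
       \<and> card (GG q s :: ('a^'l^'k) set) =
            q ^ (CARD('k) * CARD('l)) * card (R1star \<inter> KK q m :: ('a^'l^'k) set)"
proof -
  obtain p e where "prime p" "e \<ge> 1" and q: "q = p ^ e" using assms(1) by blast
  have "CARD('a) = p ^ (e * m)" using assms(3) q by (simp add: power_mult)
  with \<open>prime p\<close> have "CHAR('a) = p" by (rule CHAR_eq_if_card_eq_prime_power)
  with q have q_CHAR: "q = CHAR('a) ^ e" by simp
  have "m \<ge> 1" using assms(2) by simp
  note hyps = q_CHAR \<open>e \<ge> 1\<close> assms(3) \<open>m \<ge> 1\<close> assms(4,6)
  have "gcd 1 m = 1" by simp
  note hyps1 = q_CHAR \<open>e \<ge> 1\<close> assms(3) \<open>m \<ge> 1\<close> zero_less_one this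
  show ?thesis
  proof (intro conjI allI impI)
    fix A :: "'a^'l^'k"
    have "(\<exists>X. Phi q s X = A) \<longleftrightarrow> A \<in> range (Phi q s)" by auto
    thus "(\<exists>X. Phi q s X = A) \<longleftrightarrow> A \<in> KK q m" by (simp only: range_Phi[OF hyps])
    show "card {X. Phi q s X = A} = (if A \<in> KK q m then q ^ (CARD('k) * CARD('l)) else 0)"
      by (rule card_Phi_fibre[OF hyps])
  next
    show "(GG q s :: ('a^'l^'k) set) = Phi q s -` (R1star \<inter> KK q m)"
      by (rule GG_eq_vimage_Phi[OF hyps])
    show "card (GG q 1 :: ('a^'l^'k) set) = card (GG q s :: ('a^'l^'k) set)"
      unfolding card_GG[OF hyps] card_GG[OF hyps1] ..
    show "card (GG q s :: ('a^'l^'k) set) =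
        q ^ (CARD('k) * CARD('l)) * card (R1star \<inter> KK q m :: ('a^'l^'k) set)"
      by (rule card_GG[OF hyps])
  qed
qed

end
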